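(* Let $\mathcal{H}$ be a two-sided quaternionic Hilbert space whose inner product $\langle\cdot,\cdot\rangle$ satisfies in addition $\langle u,\lambda v\rangle=\langle\bar\lambda u,v\rangle$ for all $u,v\in\mathcal{H}$, $\lambda\in\mathbb{H}$. Then for each $n\ge1$ the formula $$\langle u_1\otimes\cdots\otimes u_n,\ v_1\otimes\cdots\otimes v_n\rangle=\langle\langle\cdots\langle\langle\langle u_1,v_1\rangle u_2,v_2\rangle u_3,v_3\rangle\cdots\rangle u_n,v_n\rangle$$ (extended additively) defines a quaternionic inner product on $\mathcal{H}^{\otimes n}$, which moreover satisfies the same additional property $\langle x,\lambda y\rangle=\langle\bar\lambda x,y\rangle$ for $x,y\in\mathcal{H}^{\otimes n}$, $\lambda\in\mathbb{H}$.
   Context: $\mathbb{H}$ denotes the quaternions. A quaternionic inner product on a right (or two-sided) $\mathbb{H}$-vector space $V$ is a map $\langle\cdot,\cdot\rangle:V\times V\to\mathbb{H}$ which is additive in each argument, satisfies $\langle u\alpha,v\beta\rangle=\bar\beta\langle u,v\rangle\alpha$ for $\alpha,\beta\in\mathbb{H}$, $\langle v,u\rangle=\overline{\langle u,v\rangle}$, and $\langle u,u\rangle\ge0$ with equality only for $u=0$. A two-sided quaternionic Hilbert space is an $\mathbb{H}$-bimodule with such an inner product, complete for the induced norm. $\mathcal{H}^{\otimes n}=\mathcal{H}\otimes_{\mathbb{H}}\cdots\otimes_{\mathbb{H}}\mathcal{H}$ ($n$ factors) is the tensor product of $\mathbb{H}$-bimodules (so $u\lambda\otimes v=u\otimes\lambda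 v$), itself an $\mathbb{H}$-bimodule with $\lambda(u_1\otimes\cdots\otimes u_n)=(\lambda u_1)\otimes\cdots\otimes u_n$ and $(u_1\otimes\cdots\otimes u_n)\lambda=u_1\otimes\cdots\otimes(u_n\lambda)$. In the formula, $\langle u_1,v_1\rangle u_2$ denotes left multiplication of $u_2$ by the quaternion $\langle u_1,v_1\rangle$. *)

theory Defs
  imports Complex_Main
begin

datatype quat = Quat (qRe: real) (qI: real) (qJ: real) (qK: real)

instantiation quat :: ring_1
begin
definition "0 = Quat 0 0 0 0"
definition "1 = Quat 1 0 0 0"
definition "p + q = Quat (qRe p + qRe q) (qI p + qI q) (qJ p + qJ q) (qK p + qK q)"
definition "p - q = Quat (qRe p - qRe q) (qI p - qI q) (qJ p - qJ q) (qK p - qK q)"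
definition "- p = Quat (- qRe p) (- qI p) (- qJ p) (- qK p)"
definition "p * q = Quat
   (qRe p * qRe q - qI p * qI q - qJ p * qJ q - qK p * qK q)
   (qRe p * qI q + qI p * qRe q + qJ p * qK q - qK p * qJ q)
   (qRe p * qJ q - qI p * qK q + qJ p * qRe q + qK p * qI q)
   (qRe p * qK q + qI p * qJ q - qJ p * qI q + qK p * qRe q)"
instance
  by standard (auto simp: zero_quat_def one_quat_def plus_quat_def minus_quat_def
      uminus_quat_def times_quat_def algebra_simps)
end

definition qcnj :: "quat \<Rightarrow> quat" where
  "qcnj q = Quat (qRe q) (- qI q) (- qJ q) (- qK q)"

definition qnonneg :: "quat \<Rightarrow> bool" where
  "qnonneg q \<longleftrightarrow> qI q = 0 \<and> qJ q = 0 \<and> qK q = 0 \<and> qRe q \<ge> 0"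

definition bimodule :: "(quat \<Rightarrow> 'v::ab_group_add \<Rightarrow> 'v) \<Rightarrow> ('v \<Rightarrow> quat \<Rightarrow> 'v) \<Rightarrow> bool" where
  "bimodule lm rm \<longleftrightarrow>
     (\<forall>a b u. lm (a * b) u = lm a (lm b u)) \<and> (\<forall>u. lm 1 u = u) \<and>
     (\<forall>a b u. lm (a + b) u = lm a u + lm b u) \<and> (\<forall>a u v. lm a (u + v) = lm a u + lm a v) \<and>
     (\<forall>a b u. rm u (a * b) = rm (rm u a) b) \<and> (\<forall>u. rm u 1 = u) \<and>
     (\<forall>a b u. rm u (a + b) = rm u a + rm u b) \<and> (\<forall>a u v. rm (u + v) a = rm u a + rm v a) \<and>
     (\<forall>a b u. rm (lm a u) b = lm a (rm u b))"

definition is_qip :: "'w set \<Rightarrow> ('w \<Rightarrow> 'w \<Rightarrow> 'w) \<Rightarrow> 'w \<Rightarrow> ('w \<Rightarrow> quat \<Rightarrow> 'w)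
    \<Rightarrow> ('w \<Rightarrow> 'w \<Rightarrow> quat) \<Rightarrow> bool" where
  "is_qip S add z rm ip \<longleftrightarrow>
     (\<forall>u\<in>S. \<forall>v\<in>S. \<forall>w\<in>S. ip (add u v) w = ip u w + ip v w \<and> ip u (add v w) = ip u v + ip u w) \<and>
     (\<forall>u\<in>S. \<forall>v\<in>S. \<forall>\<alpha> \<beta>. ip (rm u \<alpha>) (rm v \<beta>) = qcnj \<beta> * ip u v * \<alpha>) \<and>
     (\<forall>u\<in>S. \<forall>v\<in>S. ip v u = qcnj (ip u v)) \<and>
     (\<forall>u\<in>S. qnonneg (ip u u) \<and> (ip u u = 0 \<longrightarrow> u = z))"

definition hnorm :: "('v \<Rightarrow> 'v \<Rightarrow> quat) \<Rightarrow> 'v \<Rightarrow> real" where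
  "hnorm ip u = sqrt (qRe (ip u u))"

definition hcomplete :: "('v::ab_group_add \<Rightarrow> 'v \<Rightarrow> quat) \<Rightarrow> bool" where
  "hcomplete ip \<longleftrightarrow> (\<forall>x :: nat \<Rightarrow> 'v.
     (\<forall>e>0. \<exists>N. \<forall>m\<ge>N. \<forall>k\<ge>N. hnorm ip (x m - x k) < e) \<longrightarrow>
     (\<exists>l. (\<lambda>k. hnorm ip (x k - l)) \<longlonglongrightarrow> 0))"

definition two_sided_qhs :: "(quat \<Rightarrow> 'v::ab_group_add \<Rightarrow> 'v) \<Rightarrow> ('v \<Rightarrow> quat \<Rightarrow> 'v)
    \<Rightarrow> ('v \<Rightarrow> 'v \<Rightarrow> quat) \<Rightarrow> bool" where
  "two_sided_qhs lm rm ip \<longleftrightarrow> bimodule lm rm \<and> is_qip UNIV (+) 0 rm ip \<and> hcomplete ip"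

text \<open>Free abelian group on n-tuples (lists of length n): finitely supported integer
  functions on lists, supported on lists of length n.\<close>
definition fsums :: "nat \<Rightarrow> ('v list \<Rightarrow> int) set" where
  "fsums n = {f. finite {xs. f xs \<noteq> 0} \<and> (\<forall>xs. f xs \<noteq> 0 \<longrightarrow> length xs = n)}"

definition pt :: "'v list \<Rightarrow> 'v list \<Rightarrow> int" where
  "pt xs = (\<lambda>ys. if ys = xs then 1 else 0)"

text \<open>Generators of the relations: additivity in each slot, and u\<lambda> \<otimes> v = u \<otimes> \<lambda>v.\<close>
definition tgens :: "(quat \<Rightarrow> 'v::ab_group_add \<Rightarrow> 'v) \<Rightarrow> ('v \<Rightarrow> quat \<Rightarrow> 'v) \<Rightarrow> nat
    \<Rightarrow> ('v list \<Rightarrow> int) set" where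
  "tgens lm rm n =
     {(\<lambda>ys. pt (as @ [x + y] @ bs) ys - pt (as @ [x] @ bs) ys - pt (as @ [y] @ bs) ys)
        | as bs x y. length as + length bs + 1 = n} \<union>
     {(\<lambda>ys. pt (as @ [rm x a, y] @ bs) ys - pt (as @ [x, lm a y] @ bs) ys)
        | as bs x y a. length as + length bs + 2 = n}"

inductive_set trel :: "(quat \<Rightarrow> 'v::ab_group_add \<Rightarrow> 'v) \<Rightarrow> ('v \<Rightarrow> quat \<Rightarrow> 'v) \<Rightarrow> nat
    \<Rightarrow> ('v list \<Rightarrow> int) set"
  for lm rm n where
  zero: "(\<lambda>_. 0) \<in> trel lm rm n"
| gen: "g \<in> tgens lm rm n \<Longrightarrow> g \<in> trel lm rm n"
| diff: "f \<in> trel lm rm n \<Longrightarrow> g \<in> trel lm rm n \<Longrightarrow> (\<lambda>ys. f ys - g ys) \<in> trel lm rm n"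

text \<open>Elements of the tensor power are cosets of the relation subgroup.\<close>
definition tcls :: "(quat \<Rightarrow> 'v::ab_group_add \<Rightarrow> 'v) \<Rightarrow> ('v \<Rightarrow> quat \<Rightarrow> 'v) \<Rightarrow> nat
    \<Rightarrow> ('v list \<Rightarrow> int) \<Rightarrow> ('v list \<Rightarrow> int) set" where
  "tcls lm rm n f = {g. (\<lambda>ys. g ys - f ys) \<in> trel lm rm n}"

definition tpow :: "(quat \<Rightarrow> 'v::ab_group_add \<Rightarrow> 'v) \<Rightarrow> ('v \<Rightarrow> quat \<Rightarrow> 'v) \<Rightarrow> nat
    \<Rightarrow> ('v list \<Rightarrow> int) set set" where
  "tpow lm rm n = tcls lm rm n ` fsums n"

definition tens :: "(quat \<Rightarrow> 'v::ab_group_add \<Rightarrow> 'v) \<Rightarrow> ('v \<Rightarrow> quat \<Rightarrow> 'v) \<Rightarrow> nat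
    \<Rightarrow> 'v list \<Rightarrow> ('v list \<Rightarrow> int) set" where
  "tens lm rm n us = tcls lm rm n (pt us)"

definition tadd :: "('v list \<Rightarrow> int) set \<Rightarrow> ('v list \<Rightarrow> int) set \<Rightarrow> ('v list \<Rightarrow> int) set" where
  "tadd X Y = {(\<lambda>ys. f ys + g ys) | f g. f \<in> X \<and> g \<in> Y}"

definition tzero :: "(quat \<Rightarrow> 'v::ab_group_add \<Rightarrow> 'v) \<Rightarrow> ('v \<Rightarrow> quat \<Rightarrow> 'v) \<Rightarrow> nat
    \<Rightarrow> ('v list \<Rightarrow> int) set" where
  "tzero lm rm n = tcls lm rm n (\<lambda>_. 0)"

fun lhd :: "(quat \<Rightarrow> 'v \<Rightarrow> 'v) \<Rightarrow> quat \<Rightarrow> 'v list \<Rightarrow> 'v list" where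
  "lhd lm a [] = []"
| "lhd lm a (x # xs) = lm a x # xs"

definition rlst :: "('v \<Rightarrow> quat \<Rightarrow> 'v) \<Rightarrow> quat \<Rightarrow> 'v list \<Rightarrow> 'v list" where
  "rlst rm a xs = (if xs = [] then [] else butlast xs @ [rm (last xs) a])"

definition fpush :: "('v list \<Rightarrow> 'v list) \<Rightarrow> ('v list \<Rightarrow> int) \<Rightarrow> ('v list \<Rightarrow> int)" where
  "fpush h f = (\<lambda>ys. \<Sum>xs\<in>{xs. f xs \<noteq> 0 \<and> h xs = ys}. f xs)"

definition tlm :: "(quat \<Rightarrow> 'v::ab_group_add \<Rightarrow> 'v) \<Rightarrow> ('v \<Rightarrow> quat \<Rightarrow> 'v) \<Rightarrow> nat
    \<Rightarrow> quat \<Rightarrow> ('v list \<Rightarrow> int) set \<Rightarrow> ('v list \<Rightarrow> int) set" where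
  "tlm lm rm n a X = (\<Union>f\<in>X. tcls lm rm n (fpush (lhd lm a) f))"

definition trm :: "(quat \<Rightarrow> 'v::ab_group_add \<Rightarrow> 'v) \<Rightarrow> ('v \<Rightarrow> quat \<Rightarrow> 'v) \<Rightarrow> nat
    \<Rightarrow> ('v list \<Rightarrow> int) set \<Rightarrow> quat \<Rightarrow> ('v list \<Rightarrow> int) set" where
  "trm lm rm n X a = (\<Union>f\<in>X. tcls lm rm n (fpush (rlst rm a) f))"

fun iter_ip :: "(quat \<Rightarrow> 'v \<Rightarrow> 'v) \<Rightarrow> ('v \<Rightarrow> 'v \<Rightarrow> quat) \<Rightarrow> quat \<Rightarrow> ('v \<times> 'v) list \<Rightarrow> quat" where
  "iter_ip lm ip q [] = q"
| "iter_ip lm ip q ((u, v) # rest) = iter_ip lm ip (ip (lm q u) v) rest"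

definition tformula :: "(quat \<Rightarrow> 'v \<Rightarrow> 'v) \<Rightarrow> ('v \<Rightarrow> 'v \<Rightarrow> quat) \<Rightarrow> 'v list \<Rightarrow> 'v list \<Rightarrow> quat" where
  "tformula lm ip us vs = iter_ip lm ip (ip (hd us) (hd vs)) (zip (tl us) (tl vs))"

end

theory Submission
  imports Defs
begin

text \<open>
The formula is extended bi-additively to formal integer combinations of n-tuples; it annihilates
the defining relations of the tensor product, because each relation is an instance of additivity
of the inner product or of the bimodule law \<open>\<langle>\<lambda>u, v\<rangle> = \<langle>u, v\<rangle> \<lambda>\<close> read inside the nested formula,
and so descends to \<open>\<H>\<^sup>\<otimes>\<^sup>n\<close>. Everything except definiteness is then a computation on pure
tensors. For positivity one inducts on n: after a Gram--Schmidt step, the finitely many first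
factors occurring in an element are right combinations of an orthonormal family \<open>e\<^sub>j\<close>; moving the
coefficients into the second factor writes the element as \<open>\<Sum>\<^sub>j e\<^sub>j \<otimes> T\<^sub>j\<close>, and orthonormality turns
its square norm into \<open>\<Sum>\<^sub>j \<langle>T\<^sub>j, T\<^sub>j\<rangle>\<close>.
\<close>

section \<open>Quaternion arithmetic\<close>

lemma quat_eqI: "qRe p = qRe q \<Longrightarrow> qI p = qI q \<Longrightarrow> qJ p = qJ q \<Longrightarrow> qK p = qK q \<Longrightarrow> p = q"
  by (cases p; cases q) auto

lemma quat_components [simp]:
  "qRe (p + q) = qRe p + qRe q" "qI (p + q) = qI p + qI q" "qJ (p + q) = qJ p + qJ q" "qK (p + q) = qK p + qK q"
  "qRe (p - q) = qRe p - qRe q" "qI (p - q) = qI p - qI q" "qJ (p - q) = qJ p - qJ q" "qK (p - q) = qK p - qK q"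
  "qRe (- p) = - qRe p" "qI (- p) = - qI p" "qJ (- p) = - qJ p" "qK (- p) = - qK p"
  "qRe 0 = 0" "qI 0 = 0" "qJ 0 = 0" "qK 0 = 0"
  "qRe 1 = 1" "qI 1 = 0" "qJ 1 = 0" "qK 1 = 0"
  by (simp_all add: plus_quat_def minus_quat_def uminus_quat_def zero_quat_def one_quat_def)

lemma quat_mult_components [simp]:
  "qRe (p * q) = qRe p * qRe q - qI p * qI q - qJ p * qJ q - qK p * qK q"
  "qI (p * q) = qRe p * qI q + qI p * qRe q + qJ p * qK q - qK p * qJ q"
  "qJ (p * q) = qRe p * qJ q - qI p * qK q + qJ p * qRe q + qK p * qI q"
  "qK (p * q) = qRe p * qK q + qI p * qJ q - qJ p * qI q + qK p * qRe q"
  by (simp_all add: times_quat_def)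

lemma of_nat_quat: "of_nat n = Quat (real n) 0 0 0"
  by (induction n) (auto intro: quat_eqI)

lemma of_int_quat: "of_int k = Quat (of_int k) 0 0 0"
proof (cases k rule: int_cases)
  case (nonneg n) then show ?thesis by (simp add: of_nat_quat)
next
  case (neg n) then show ?thesis by (auto intro!: quat_eqI simp: of_nat_quat)
qed

lemma of_int_quat_components [simp]:
  "qRe (of_int k) = of_int k" "qI (of_int k) = 0" "qJ (of_int k) = 0" "qK (of_int k) = 0"
  by (subst of_int_quat; simp)+

lemma qcnj_components [simp]:
  "qRe (qcnj q) = qRe q" "qI (qcnj q) = - qI q" "qJ (qcnj q) = - qJ q" "qK (qcnj q) = - qK q"
  by (simp_all add: qcnj_def)

lemma qcnj_simps [simp]:
  "qcnj (p + q) = qcnj p + qcnj q" "qcnj (p - q) = qcnj p - qcnj q" "qcnj (- p) = - qcnj p"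
  "qcnj (p * q) = qcnj q * qcnj p" "qcnj (qcnj p) = p" "qcnj 0 = 0" "qcnj 1 = 1"
  "qcnj (of_int k) = of_int k"
  by (auto intro!: quat_eqI simp: algebra_simps)

lemma qcnj_sum: "qcnj (sum f A) = (\<Sum>x\<in>A. qcnj (f x))"
  by (induction A rule: infinite_finite_induct) auto

lemma quat_sum_components:
  "qRe (sum f A) = (\<Sum>x\<in>A. qRe (f x))" "qI (sum f A) = (\<Sum>x\<in>A. qI (f x))"
  "qJ (sum f A) = (\<Sum>x\<in>A. qJ (f x))" "qK (sum f A) = (\<Sum>x\<in>A. qK (f x))"
  by (induction A rule: infinite_finite_induct) auto

lemma qnonneg_sum: "(\<And>x. x \<in> A \<Longrightarrow> qnonneg (f x)) \<Longrightarrow> qnonneg (sum f A)"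
  unfolding qnonneg_def by (simp add: quat_sum_components sum_nonneg)

lemma qnonneg_sum_eq_0:
  assumes "finite A" "\<And>x. x \<in> A \<Longrightarrow> qnonneg (f x)" "sum f A = 0" "x \<in> A"
  shows "f x = 0"
proof -
  have "(\<Sum>x\<in>A. qRe (f x)) = 0"
    using assms(3) by (metis quat_sum_components(1) quat_components(13))
  then have "qRe (f x) = 0"
    using sum_nonneg_eq_0_iff[OF assms(1), of "\<lambda>x. qRe (f x)"] assms(2,4) unfolding qnonneg_def by auto
  then show "f x = 0" using assms(2)[OF assms(4)] unfolding qnonneg_def by (auto intro: quat_eqI)
qed

lemma qnonneg_eq_Quat: "qnonneg q \<Longrightarrow> q = Quat (qRe q) 0 0 0"
  unfolding qnonneg_def by (cases q) auto

lemma of_int_mult_left_commute: "(of_int k :: 'b::ring_1) * (c * x) = c * (of_int k * x)"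
  by (simp only: mult.assoc[symmetric] mult_of_int_commute[of k c])

section \<open>Finitely supported integer functions\<close>

definition supp :: "('a \<Rightarrow> int) \<Rightarrow> 'a set" where
  "supp f = {x. f x \<noteq> 0}"

definition lin :: "('a \<Rightarrow> quat) \<Rightarrow> ('a \<Rightarrow> int) \<Rightarrow> quat" where
  "lin L f = (\<Sum>x\<in>supp f. of_int (f x) * L x)"

lemma lin_eq: "finite S \<Longrightarrow> supp f \<subseteq> S \<Longrightarrow> lin L f = (\<Sum>x\<in>S. of_int (f x) * L x)"
  unfolding lin_def by (rule sum.mono_neutral_left) (auto simp: supp_def)

lemma supp_diff: "supp (\<lambda>x. f x - g x) \<subseteq> supp f \<union> supp g"
  and supp_add: "supp (\<lambda>x. f x + g x) \<subseteq> supp f \<union> supp g"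
  and supp_smult: "supp (\<lambda>x. k * f x) \<subseteq> supp f"
  and supp_sum: "supp (\<lambda>x. \<Sum>j\<in>J. F j x) \<subseteq> (\<Union>j\<in>J. supp (F j))"
  by (auto simp: supp_def intro: ccontr dest: sum.neutral)

lemma supp_pt: "supp (pt xs) = {xs}"
  by (auto simp: supp_def pt_def)

lemma finite_supp_diff: "finite (supp f) \<Longrightarrow> finite (supp g) \<Longrightarrow> finite (supp (\<lambda>x. f x - g x))"
  by (rule finite_subset[OF supp_diff]) simp

lemma finite_supp_sum:
  "finite J \<Longrightarrow> (\<And>j. j \<in> J \<Longrightarrow> finite (supp (F j))) \<Longrightarrow> finite (supp (\<lambda>x. \<Sum>j\<in>J. F j x))"
  by (rule finite_subset[OF supp_sum]) simp

lemma lin_diff: "finite (supp f) \<Longrightarrow> finite (supp g) \<Longrightarrow> lin L (\<lambda>x. f x - g x) = lin L f - lin L g"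
  by (subst (1 2 3) lin_eq[where S = "supp f \<union> supp g"])
     (use supp_diff[of f g] in \<open>auto simp: algebra_simps sum_subtractf\<close>)

lemma lin_add: "finite (supp f) \<Longrightarrow> finite (supp g) \<Longrightarrow> lin L (\<lambda>x. f x + g x) = lin L f + lin L g"
  by (subst (1 2 3) lin_eq[where S = "supp f \<union> supp g"])
     (use supp_add[of f g] in \<open>auto simp: algebra_simps sum.distrib\<close>)

lemma lin_zero [simp]: "lin L (\<lambda>_. 0) = 0"
  by (simp add: lin_def supp_def)

lemma lin_sum:
  "finite J \<Longrightarrow> (\<And>j. j \<in> J \<Longrightarrow> finite (supp (F j))) \<Longrightarrow>
   lin L (\<lambda>x. \<Sum>j\<in>J. F j x) = (\<Sum>j\<in>J. lin L (F j))"
proof (induction J rule: finite_induct)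
  case (insert a J)
  have "lin L (\<lambda>x. F a x + (\<Sum>j\<in>J. F j x)) = lin L (F a) + lin L (\<lambda>x. \<Sum>j\<in>J. F j x)"
    by (rule lin_add) (use insert finite_supp_sum in auto)
  then show ?case using insert by simp
qed simp

lemma lin_pt: "lin L (pt xs) = L xs"
  unfolding lin_def supp_pt by (simp add: pt_def)

lemma lin_cong: "(\<And>x. x \<in> supp f \<Longrightarrow> L x = L' x) \<Longrightarrow> lin L f = lin L' f"
  unfolding lin_def by (rule sum.cong) auto

lemma lin_fun_add: "lin (\<lambda>x. L x + L' x) f = lin L f + lin L' f"
  unfolding lin_def by (simp add: algebra_simps sum.distrib)

lemma lin_fun_diff: "lin (\<lambda>x. L x - L' x) f = lin L f - lin L' f"
  unfolding lin_def by (simp add: algebra_simps sum_subtractf)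

lemma lin_fun_sum: "lin (\<lambda>x. \<Sum>k\<in>K. L k x) f = (\<Sum>k\<in>K. lin (L k) f)"
  unfolding lin_def sum_distrib_left by (rule sum.swap)

lemma lin_fun_zero [simp]: "lin (\<lambda>x. 0) f = 0"
  unfolding lin_def by simp

lemma lin_fun_mult_left: "lin (\<lambda>x. c * L x) f = c * lin L f"
  unfolding lin_def sum_distrib_left
  by (rule sum.cong) (simp_all only: of_int_mult_left_commute)

lemma lin_fun_mult_right: "lin (\<lambda>x. L x * c) f = lin L f * c"
  unfolding lin_def by (simp add: sum_distrib_right mult.assoc)

lemma qcnj_lin: "qcnj (lin L f) = lin (\<lambda>x. qcnj (L x)) f"
  unfolding lin_def qcnj_sum
  by (rule sum.cong) (simp_all add: mult_of_int_commute[of "f _" "qcnj _"])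

lemma lin_swap: "lin (\<lambda>x. lin (\<lambda>y. K x y) g) f = lin (\<lambda>y. lin (\<lambda>x. K x y) f) g"
  unfolding lin_def sum_distrib_left
  by (subst sum.swap) (rule sum.cong, simp, rule sum.cong, simp, rule of_int_mult_left_commute)

lemma pt_expansion: "finite (supp f) \<Longrightarrow> f ys = (\<Sum>xs\<in>supp f. f xs * pt xs ys)"
proof -
  assume "finite (supp f)"
  moreover have "(\<Sum>xs\<in>supp f. f xs * pt xs ys) = (\<Sum>xs\<in>supp f. if xs = ys then f ys else 0)"
    by (rule sum.cong) (auto simp: pt_def)
  ultimately show ?thesis by (simp add: supp_def)
qed

lemma fpush_eq: "finite S \<Longrightarrow> supp f \<subseteq> S \<Longrightarrow> fpush h f ys = (\<Sum>xs\<in>S. f xs * pt (h xs) ys)"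
proof -
  assume S: "finite S" "supp f \<subseteq> S"
  have "fpush h f ys = (\<Sum>xs\<in>{xs\<in>S. h xs = ys}. f xs)"
    unfolding fpush_def by (rule sum.mono_neutral_left) (use S in \<open>auto simp: supp_def\<close>)
  also have "\<dots> = (\<Sum>xs\<in>S. f xs * pt (h xs) ys)"
    using S(1) by (simp add: sum.inter_filter pt_def) (rule sum.cong, auto)
  finally show ?thesis .
qed

lemma supp_fpush: "supp (fpush h f) \<subseteq> h ` supp f"
proof
  fix ys assume "ys \<in> supp (fpush h f)"
  then have "{xs. f xs \<noteq> 0 \<and> h xs = ys} \<noteq> {}"
    unfolding supp_def fpush_def by (cases "{xs. f xs \<noteq> 0 \<and> h xs = ys} = {}") auto
  then show "ys \<in> h ` supp f" by (auto simp: supp_def)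
qed

lemma finite_supp_fpush: "finite (supp f) \<Longrightarrow> finite (supp (fpush h f))"
  using supp_fpush finite_subset by blast

lemma fpush_diff:
  "finite (supp f) \<Longrightarrow> finite (supp g) \<Longrightarrow> fpush h (\<lambda>x. f x - g x) = (\<lambda>y. fpush h f y - fpush h g y)"
  by (rule ext, subst (1 2 3) fpush_eq[where S = "supp f \<union> supp g"])
     (use supp_diff[of f g] in \<open>auto simp: algebra_simps sum_subtractf\<close>)

lemma fpush_pt: "fpush h (pt xs) = pt (h xs)"
  by (rule ext, subst fpush_eq[where S = "{xs}"]) (auto simp: supp_def pt_def)

lemma fpush_zero: "fpush h (\<lambda>_. 0) = (\<lambda>_. 0)"
  by (simp add: fpush_def)

lemma fpush_pt_diff: "fpush h (\<lambda>ys. pt A ys - pt B ys) = (\<lambda>ys. pt (h A) ys - pt (h B) ys)"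
  using fpush_diff[of "pt A" "pt B" h] by (simp add: fpush_pt supp_pt)

lemma fpush_pt_diff3:
  "fpush h (\<lambda>ys. pt A ys - pt B ys - pt C ys) = (\<lambda>ys. pt (h A) ys - pt (h B) ys - pt (h C) ys)"
  using fpush_diff[of "\<lambda>ys. pt A ys - pt B ys" "pt C" h]
  by (simp add: finite_supp_diff fpush_pt_diff fpush_pt supp_pt)

lemma fpush_Cons_sum:
  "fpush ((#) e) (\<lambda>ys. \<Sum>x\<in>S. a x * pt (zs x) ys) = (\<lambda>ys. \<Sum>x\<in>S. a x * pt (e # zs x) ys)"
proof
  fix ys
  let ?F = "\<lambda>ys. \<Sum>x\<in>S. a x * pt (zs x) ys"
  show "fpush ((#) e) ?F ys = (\<Sum>x\<in>S. a x * pt (e # zs x) ys)"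
  proof (cases "\<exists>t. ys = e # t")
    case True
    then obtain t where ys: "ys = e # t" by blast
    have "{xs. ?F xs \<noteq> 0 \<and> e # xs = ys} = (if ?F t \<noteq> 0 then {t} else {})" by (auto simp: ys)
    then show ?thesis by (simp add: fpush_def ys pt_def)
  next
    case False
    then have "{xs. ?F xs \<noteq> 0 \<and> e # xs = ys} = {}" by auto
    then show ?thesis unfolding fpush_def using False by (auto simp: pt_def intro!: sum.neutral)
  qed
qed

lemma lin_fpush: "finite (supp f) \<Longrightarrow> lin L (fpush h f) = lin (\<lambda>x. L (h x)) f"
proof -
  assume fin: "finite (supp f)"
  let ?S = "supp f"
  have "lin L (fpush h f) = (\<Sum>y\<in>h ` ?S. of_int (fpush h f y) * L y)"
    by (rule lin_eq) (use fin supp_fpush in auto)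
  also have "\<dots> = (\<Sum>y\<in>h ` ?S. (\<Sum>x\<in>{x\<in>?S. h x = y}. of_int (f x) * L (h x)))"
  proof (rule sum.cong, simp)
    fix y
    have "fpush h f y = (\<Sum>x\<in>{x\<in>?S. h x = y}. f x)"
      unfolding fpush_def supp_def by (rule sum.cong) auto
    then show "of_int (fpush h f y) * L y = (\<Sum>x\<in>{x\<in>?S. h x = y}. of_int (f x) * L (h x))"
      by (simp add: sum_distrib_right)
  qed
  also have "\<dots> = lin (\<lambda>x. L (h x)) f"
    unfolding lin_def by (rule sum.image_gen[OF fin, symmetric])
  finally show ?thesis .
qed

lemma fsums_iff: "f \<in> fsums n \<longleftrightarrow> finite (supp f) \<and> (\<forall>xs\<in>supp f. length xs = n)"
  by (auto simp: fsums_def supp_def)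

lemma fsums_finite_supp: "f \<in> fsums n \<Longrightarrow> finite (supp f)"
  by (simp add: fsums_iff)

lemma fsums_length: "f \<in> fsums n \<Longrightarrow> xs \<in> supp f \<Longrightarrow> length xs = n"
  by (simp add: fsums_iff)

lemma fsums_pt: "length xs = n \<Longrightarrow> pt xs \<in> fsums n"
  by (simp add: fsums_iff supp_pt)

lemma fsums_diff: "f \<in> fsums n \<Longrightarrow> g \<in> fsums n \<Longrightarrow> (\<lambda>x. f x - g x) \<in> fsums n"
  unfolding fsums_iff using supp_diff[of f g] by (blast intro: finite_subset)

lemma fsums_add: "f \<in> fsums n \<Longrightarrow> g \<in> fsums n \<Longrightarrow> (\<lambda>x. f x + g x) \<in> fsums n"
  unfolding fsums_iff using supp_add[of f g] by (blast intro: finite_subset)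

lemma fsums_smult: "f \<in> fsums n \<Longrightarrow> (\<lambda>x. k * f x) \<in> fsums n"
  unfolding fsums_iff using supp_smult[of k f] by (blast intro: finite_subset)

lemma fsums_sum: "finite J \<Longrightarrow> (\<And>j. j \<in> J \<Longrightarrow> F j \<in> fsums n) \<Longrightarrow> (\<lambda>x. \<Sum>j\<in>J. F j x) \<in> fsums n"
  unfolding fsums_iff using supp_sum[of F J] finite_supp_sum[of J F] by blast

lemma fsums_fpush:
  assumes "\<And>xs. length (h xs) = length xs" "f \<in> fsums n"
  shows "fpush h f \<in> fsums n"
proof -
  have "length ys = n" if "ys \<in> supp (fpush h f)" for ys
    using supp_fpush[of h f] that fsums_length[OF assms(2)] assms(1) by auto
  then show ?thesis
    using finite_supp_fpush fsums_finite_supp[OF assms(2)] by (simp add: fsums_iff)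
qed

lemma fsums_fpush_Cons:
  assumes "f \<in> fsums n"
  shows "fpush ((#) e) f \<in> fsums (Suc n)"
proof -
  have "length ys = Suc n" if "ys \<in> supp (fpush ((#) e) f)" for ys
    using supp_fpush[of "(#) e" f] that fsums_length[OF assms] by auto
  then show ?thesis
    using finite_supp_fpush fsums_finite_supp[OF assms] by (simp add: fsums_iff)
qed

lemma rlst_Cons: "xs \<noteq> [] \<Longrightarrow> rlst rm a (x # xs) = x # rlst rm a xs"
  by (simp add: rlst_def)

lemma rlst_append: "bs \<noteq> [] \<Longrightarrow> rlst rm a (xs @ bs) = xs @ rlst rm a bs"
  by (simp add: rlst_def butlast_append)

lemma rlst_snoc: "rlst rm a (xs @ [z]) = xs @ [rm z a]"
  by (simp add: rlst_def)

lemma length_rlst [simp]: "length (rlst rm a xs) = length xs"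
  by (simp add: rlst_def)

lemma length_lhd [simp]: "length (lhd lm a xs) = length xs"
  by (cases xs) auto

section \<open>Two-sided quaternionic Hilbert spaces with the adjoint condition\<close>

locale adjoint_qhs =
  fixes lm :: "quat \<Rightarrow> 'v::ab_group_add \<Rightarrow> 'v" and rm :: "'v \<Rightarrow> quat \<Rightarrow> 'v" and ip :: "'v \<Rightarrow> 'v \<Rightarrow> quat"
  assumes qhs: "two_sided_qhs lm rm ip"
    and ip_lm_right: "ip u (lm a v) = ip (lm (qcnj a) u) v"
begin

lemma bimodule: "bimodule lm rm" and is_qip: "is_qip UNIV (+) 0 rm ip"
  using qhs by (auto simp: two_sided_qhs_def)

lemma lm_mult: "lm (a * b) u = lm a (lm b u)"
  using bimodule unfolding bimodule_def by simp

lemma lm_one [simp]: "lm 1 u = u"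
  and lm_add_scalar: "lm (a + b) u = lm a u + lm b u"
  and lm_add: "lm a (u + v) = lm a u + lm a v"
  and rm_mult: "rm u (a * b) = rm (rm u a) b"
  and rm_one [simp]: "rm u 1 = u"
  and rm_add_scalar: "rm u (a + b) = rm u a + rm u b"
  and rm_add: "rm (u + v) a = rm u a + rm v a"
  and rm_lm: "rm (lm a u) b = lm a (rm u b)"
  using bimodule unfolding bimodule_def by blast+

lemma ip_add_left: "ip (u + v) w = ip u w + ip v w"
  and ip_rm: "ip (rm u a) (rm v b) = qcnj b * ip u v * a"
  and ip_commute: "ip v u = qcnj (ip u v)"
  and ip_self_nonneg: "qnonneg (ip u u)"
  and ip_self_eq_0: "ip u u = 0 \<Longrightarrow> u = 0"
  using is_qip unfolding is_qip_def by blast+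

lemma ip_rm_left: "ip (rm u a) v = ip u v * a"
  using ip_rm[of u a v 1] by simp

lemma ip_zero_left [simp]: "ip 0 v = 0"
  using ip_add_left[of 0 0 v] by simp

lemma ip_diff_left: "ip (u - v) w = ip u w - ip v w"
  using ip_add_left[of "u - v" v w] by (simp add: algebra_simps)

lemma ip_sum_left: "ip (\<Sum>j\<in>J. a j) w = (\<Sum>j\<in>J. ip (a j) w)"
  by (induction J rule: infinite_finite_induct) (auto simp: ip_add_left)

lemma lm_zero_scalar [simp]: "lm 0 u = 0"
  using lm_add_scalar[of 0 0 u] by simp

lemma rm_zero_scalar [simp]: "rm u 0 = 0"
  using rm_add_scalar[of u 0 0] by simp

definition chain_ip :: "quat \<Rightarrow> 'v list \<Rightarrow> 'v list \<Rightarrow> quat" where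
  "chain_ip q xs ys = iter_ip lm ip q (zip xs ys)"

lemma chain_ip_Cons [simp]: "chain_ip q (x # xs) (y # ys) = chain_ip (ip (lm q x) y) xs ys"
  and chain_ip_Nil [simp]: "chain_ip q [] ys = q" "chain_ip q xs [] = q"
  by (simp_all add: chain_ip_def)

lemma tformula_eq_chain_ip: "xs \<noteq> [] \<Longrightarrow> ys \<noteq> [] \<Longrightarrow> tformula lm ip xs ys = chain_ip 1 xs ys"
  by (cases xs; cases ys) (auto simp: tformula_def chain_ip_def)

lemma chain_ip_add: "chain_ip (p + q) xs ys = chain_ip p xs ys + chain_ip q xs ys"
proof (induction xs arbitrary: p q ys)
  case (Cons x xs)
  then show ?case by (cases ys) (simp_all add: lm_add_scalar ip_add_left)
qed simp

lemma chain_ip_zero [simp]: "chain_ip 0 xs ys = 0"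
  using chain_ip_add[of 0 0 xs ys] by simp

lemma chain_ip_commute: "chain_ip (qcnj q) ys xs = qcnj (chain_ip q xs ys)"
proof (induction xs arbitrary: q ys)
  case (Cons x xs)
  have "ip (lm (qcnj q) y) x = qcnj (ip (lm q x) y)" for y
    by (metis ip_commute ip_lm_right)
  then show ?case using Cons by (cases ys) simp_all
qed simp

lemma chain_ip_add_slot:
  "length ys = length as + Suc (length bs) \<Longrightarrow>
   chain_ip q (as @ (x + y) # bs) ys = chain_ip q (as @ x # bs) ys + chain_ip q (as @ y # bs) ys"
proof (induction as arbitrary: q ys)
  case Nil
  then obtain y0 ys' where "ys = y0 # ys'" by (cases ys) auto
  then show ?case by (simp add: lm_add ip_add_left chain_ip_add)
next
  case (Cons a as)
  then show ?case by (cases ys) auto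
qed

lemma chain_ip_balanced_slot:
  "length ys = length as + Suc (Suc (length bs)) \<Longrightarrow>
   chain_ip q (as @ rm x a # y # bs) ys = chain_ip q (as @ x # lm a y # bs) ys"
proof (induction as arbitrary: q ys)
  case Nil
  then obtain y0 y1 ys' where "ys = y0 # y1 # ys'" by (cases ys; cases "tl ys") auto
  then show ?case by (simp add: rm_lm[symmetric] ip_rm_left lm_mult)
next
  case (Cons c as)
  then show ?case by (cases ys) auto
qed

lemma chain_ip_rlst:
  "length xs = length ys \<Longrightarrow> xs \<noteq> [] \<Longrightarrow>
   chain_ip q (rlst rm a xs) (rlst rm b ys) = qcnj b * chain_ip q xs ys * a"
proof (induction xs arbitrary: q ys)
  case (Cons x xs)
  then obtain y ys' where ys: "ys = y # ys'" by (cases ys) auto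
  show ?case
  proof (cases "xs = []")
    case True
    then show ?thesis using Cons ys by (simp add: rlst_def rm_lm[symmetric] ip_rm)
  next
    case False
    moreover have "ys' \<noteq> []" using False Cons.prems ys by auto
    ultimately show ?thesis using Cons ys by (simp add: rlst_Cons)
  qed
qed simp

lemma chain_ip_lhd: "chain_ip 1 xs (lhd lm a ys) = chain_ip 1 (lhd lm (qcnj a) xs) ys"
  by (cases xs; cases ys) (auto simp: ip_lm_right)

end

section \<open>The relation subgroup and its cosets\<close>

lemma trel_additive:
  "length as + length bs + 1 = n \<Longrightarrow>
   (\<lambda>ys. pt (as @ [x + y] @ bs) ys - pt (as @ [x] @ bs) ys - pt (as @ [y] @ bs) ys) \<in> trel lm rm n"
  by (rule trel.gen) (unfold tgens_def, rule UnI1, blast)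

lemma trel_balanced:
  "length as + length bs + 2 = n \<Longrightarrow>
   (\<lambda>ys. pt (as @ [rm x a, y] @ bs) ys - pt (as @ [x, lm a y] @ bs) ys) \<in> trel lm rm n"
  by (rule trel.gen) (unfold tgens_def, rule UnI2, blast)

lemma tgens_fsums: "g \<in> tgens lm rm n \<Longrightarrow> g \<in> fsums n"
  unfolding tgens_def fsums_def pt_def
  by (auto intro: finite_subset[of _ "{_, _, _}"] finite_subset[of _ "{_, _}"] split: if_splits)

lemma trel_fsums: "f \<in> trel lm rm n \<Longrightarrow> f \<in> fsums n"
proof (induction rule: trel.induct)
  case zero then show ?case by (simp add: fsums_def)
qed (auto intro: tgens_fsums fsums_diff)

lemma trel_finite_supp: "f \<in> trel lm rm n \<Longrightarrow> finite (supp f)"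
  using trel_fsums fsums_finite_supp by blast

lemma trel_uminus: "f \<in> trel lm rm n \<Longrightarrow> (\<lambda>x. - f x) \<in> trel lm rm n"
  using trel.diff[OF trel.zero, where g = f] by simp

lemma trel_add:
  assumes "f \<in> trel lm rm n" "g \<in> trel lm rm n"
  shows "(\<lambda>x. f x + g x) \<in> trel lm rm n"
  using trel.diff[OF assms(1) trel_uminus[OF assms(2)]] by simp

lemma trel_add':
  assumes "f \<in> trel lm rm n" "g \<in> trel lm rm n" "\<And>ys. h ys = f ys + g ys"
  shows "h \<in> trel lm rm n"
proof -
  have "h = (\<lambda>x. f x + g x)" using assms(3) by auto
  then show ?thesis using trel_add[OF assms(1,2)] by simp
qed

lemma trel_smult: "f \<in> trel lm rm n \<Longrightarrow> (\<lambda>x. k * f x) \<in> trel lm rm n"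
proof (induction k rule: int_induct[where k = 0])
  case base then show ?case using trel.zero by simp
next
  case (step1 i) then show ?case using trel_add[OF step1(2)[OF step1(3)] step1(3)] by (simp add: algebra_simps)
next
  case (step2 i) then show ?case using trel.diff[OF step2(2,3)] by (simp add: algebra_simps)
qed

lemma trel_sum:
  "finite J \<Longrightarrow> (\<And>j. j \<in> J \<Longrightarrow> F j \<in> trel lm rm n) \<Longrightarrow> (\<lambda>x. \<Sum>j\<in>J. F j x) \<in> trel lm rm n"
  by (induction J rule: finite_induct) (auto intro: trel.zero trel_add)

lemma trel_fpush:
  assumes "\<And>g. g \<in> tgens lm rm n \<Longrightarrow> fpush h g \<in> trel lm rm m"
  shows "f \<in> trel lm rm n \<Longrightarrow> fpush h f \<in> trel lm rm m"
proof (induction rule: trel.induct)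
  case zero then show ?case by (simp add: fpush_zero trel.zero)
next
  case (gen g) then show ?case by (rule assms)
next
  case (diff f g) then show ?case by (simp add: fpush_diff trel_finite_supp trel.diff)
qed

lemma trel_fpush_Cons: "f \<in> trel lm rm n \<Longrightarrow> fpush ((#) e) f \<in> trel lm rm (Suc n)"
proof (rule trel_fpush)
  fix g assume "g \<in> tgens lm rm n"
  then show "fpush ((#) e) g \<in> trel lm rm (Suc n)"
    unfolding tgens_def
  proof (elim UnE CollectE exE conjE)
    fix as bs x y
    assume "g = (\<lambda>ys. pt (as @ [x + y] @ bs) ys - pt (as @ [x] @ bs) ys - pt (as @ [y] @ bs) ys)"
      and "length as + length bs + 1 = n"
    then show ?thesis using trel_additive[where as = "e # as" and n = "Suc n"] by (simp add: fpush_pt_diff3)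
  next
    fix as bs x y a
    assume "g = (\<lambda>ys. pt (as @ [rm x a, y] @ bs) ys - pt (as @ [x, lm a y] @ bs) ys)"
      and "length as + length bs + 2 = n"
    then show ?thesis using trel_balanced[where as = "e # as" and n = "Suc n"] by (simp add: fpush_pt_diff)
  qed
qed

lemma tcls_eq:
  assumes "(\<lambda>x. f x - g x) \<in> trel lm rm n"
  shows "tcls lm rm n f = tcls lm rm n g"
proof -
  have "(\<lambda>x. h x - f x) \<in> trel lm rm n \<longleftrightarrow> (\<lambda>x. h x - g x) \<in> trel lm rm n" for h
    using trel_add'[OF _ assms, of "\<lambda>x. h x - f x" "\<lambda>x. h x - g x"] trel.diff[OF _ assms, of "\<lambda>x. h x - g x"]
    by auto
  then show ?thesis by (simp add: tcls_def)
qed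

lemma tcls_self: "f \<in> tcls lm rm n f"
  using trel.zero by (simp add: tcls_def)

lemma tcls_diff_trel: "g \<in> tcls lm rm n f \<Longrightarrow> (\<lambda>x. g x - f x) \<in> trel lm rm n"
  by (simp add: tcls_def)

lemma tcls_fsums: "f \<in> fsums n \<Longrightarrow> g \<in> tcls lm rm n f \<Longrightarrow> g \<in> fsums n"
  using fsums_add[OF trel_fsums[OF tcls_diff_trel] , of g lm rm n f f] by simp

lemma tpowE: "X \<in> tpow lm rm n \<Longrightarrow> (\<And>f. f \<in> fsums n \<Longrightarrow> X = tcls lm rm n f \<Longrightarrow> P) \<Longrightarrow> P"
  unfolding tpow_def by blast

lemma tadd_tcls: "tadd (tcls lm rm n f) (tcls lm rm n g) = tcls lm rm n (\<lambda>x. f x + g x)"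
proof (rule set_eqI)
  fix h
  show "h \<in> tadd (tcls lm rm n f) (tcls lm rm n g) \<longleftrightarrow> h \<in> tcls lm rm n (\<lambda>x. f x + g x)"
  proof
    assume "h \<in> tadd (tcls lm rm n f) (tcls lm rm n g)"
    then obtain f' g' where "h = (\<lambda>x. f' x + g' x)" "f' \<in> tcls lm rm n f" "g' \<in> tcls lm rm n g"
      unfolding tadd_def by blast
    then show "h \<in> tcls lm rm n (\<lambda>x. f x + g x)"
      unfolding tcls_def by (auto intro: trel_add'[of "\<lambda>ys. f' ys - f ys" lm rm n "\<lambda>ys. g' ys - g ys"])
  next
    assume "h \<in> tcls lm rm n (\<lambda>x. f x + g x)"
    then have "(\<lambda>x. h x - g x) \<in> tcls lm rm n f"
      by (simp add: tcls_def algebra_simps)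
    then show "h \<in> tadd (tcls lm rm n f) (tcls lm rm n g)"
      unfolding tadd_def
      by (intro CollectI exI[of _ "\<lambda>x. h x - g x"] exI[of _ g]) (simp add: tcls_self)
  qed
qed

text \<open>So the unions in the definitions of \<open>tlm\<close> and \<open>trm\<close> collapse to a single coset.\<close>

lemma tcls_fpush:
  assumes f: "f \<in> fsums n" and trel: "\<And>g. g \<in> trel lm rm n \<Longrightarrow> fpush h g \<in> trel lm rm n"
  shows "(\<Union>f'\<in>tcls lm rm n f. tcls lm rm n (fpush h f')) = tcls lm rm n (fpush h f)"
proof -
  have "tcls lm rm n (fpush h f') = tcls lm rm n (fpush h f)" if f': "f' \<in> tcls lm rm n f" for f'
  proof (rule tcls_eq)
    have "(\<lambda>x. fpush h f' x - fpush h f x) = fpush h (\<lambda>x. f' x - f x)"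
      using f tcls_fsums[OF f f'] by (simp add: fpush_diff fsums_finite_supp)
    then show "(\<lambda>x. fpush h f' x - fpush h f x) \<in> trel lm rm n"
      using trel[OF tcls_diff_trel[OF f']] by simp
  qed
  then show ?thesis using tcls_self[of f lm rm n] by blast
qed

context adjoint_qhs
begin

abbreviation rel :: "nat \<Rightarrow> ('v list \<Rightarrow> int) set" where
  "rel n \<equiv> trel lm rm n"

lemma trel_fpush_lhd: "f \<in> rel n \<Longrightarrow> fpush (lhd lm c) f \<in> rel n"
proof (rule trel_fpush)
  fix g assume "g \<in> tgens lm rm n"
  then show "fpush (lhd lm c) g \<in> rel n"
    unfolding tgens_def
  proof (elim UnE CollectE exE conjE)
    fix as bs x y
    assume g: "g = (\<lambda>ys. pt (as @ [x + y] @ bs) ys - pt (as @ [x] @ bs) ys - pt (as @ [y] @ bs) ys)"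
      and l: "length as + length bs + 1 = n"
    show ?thesis
    proof (cases as)
      case Nil
      then show ?thesis unfolding g fpush_pt_diff3
        using trel_additive[of "[]" bs n "lm c x" "lm c y" lm rm] l by (simp add: lm_add)
    next
      case (Cons a0 as')
      then show ?thesis unfolding g fpush_pt_diff3
        using trel_additive[of "lm c a0 # as'" bs n x y lm rm] l by simp
    qed
  next
    fix as bs x y a
    assume g: "g = (\<lambda>ys. pt (as @ [rm x a, y] @ bs) ys - pt (as @ [x, lm a y] @ bs) ys)"
      and l: "length as + length bs + 2 = n"
    show ?thesis
    proof (cases as)
      case Nil
      then show ?thesis unfolding g fpush_pt_diff
        using trel_balanced[of "[]" bs n rm "lm c x" a y lm] l by (simp add: rm_lm)
    next
      case (Cons a0 as')
      then show ?thesis unfolding g fpush_pt_diff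
        using trel_balanced[of "lm c a0 # as'" bs n rm x a y lm] l by simp
    qed
  qed
qed

lemma trel_fpush_rlst: "f \<in> rel n \<Longrightarrow> fpush (rlst rm c) f \<in> rel n"
proof (rule trel_fpush)
  fix g assume "g \<in> tgens lm rm n"
  then show "fpush (rlst rm c) g \<in> rel n"
    unfolding tgens_def
  proof (elim UnE CollectE exE conjE)
    fix as bs x y
    assume g: "g = (\<lambda>ys. pt (as @ [x + y] @ bs) ys - pt (as @ [x] @ bs) ys - pt (as @ [y] @ bs) ys)"
      and l: "length as + length bs + 1 = n"
    show ?thesis
    proof (cases "bs = []")
      case True
      then show ?thesis unfolding g fpush_pt_diff3
        using trel_additive[of as "[]" n "rm x c" "rm y c" lm rm] l
        by (simp add: rm_add rlst_snoc[where xs = as, simplified])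
    next
      case False
      then show ?thesis unfolding g fpush_pt_diff3
        using trel_additive[of as "rlst rm c bs" n x y lm rm] l rlst_append[OF False, of rm c "as @ [_]"]
        by simp
    qed
  next
    fix as bs x y a
    assume g: "g = (\<lambda>ys. pt (as @ [rm x a, y] @ bs) ys - pt (as @ [x, lm a y] @ bs) ys)"
      and l: "length as + length bs + 2 = n"
    show ?thesis
    proof (cases "bs = []")
      case True
      have "rlst rm c (as @ [rm x a, y]) = (as @ [rm x a]) @ [rm y c]"
        using rlst_snoc[of rm c "as @ [rm x a]" y] by simp
      moreover have "rlst rm c (as @ [x, lm a y]) = (as @ [x]) @ [lm a (rm y c)]"
        using rlst_snoc[of rm c "as @ [x]" "lm a y"] by (simp add: rm_lm)
      ultimately show ?thesis unfolding g fpush_pt_diff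
        using True trel_balanced[of as "[]" n rm x a "rm y c" lm] l by simp
    next
      case False
      then show ?thesis unfolding g fpush_pt_diff
        using trel_balanced[of as "rlst rm c bs" n rm x a y lm] l rlst_append[OF False, of rm c "as @ [_, _]"]
        by simp
    qed
  qed
qed

lemma trm_tcls: "f \<in> fsums n \<Longrightarrow> trm lm rm n (tcls lm rm n f) a = tcls lm rm n (fpush (rlst rm a) f)"
  unfolding trm_def by (rule tcls_fpush) (auto intro: trel_fpush_rlst)

lemma tlm_tcls: "f \<in> fsums n \<Longrightarrow> tlm lm rm n a (tcls lm rm n f) = tcls lm rm n (fpush (lhd lm a) f)"
  unfolding tlm_def by (rule tcls_fpush) (auto intro: trel_fpush_lhd)


section \<open>The inner product on formal sums\<close>

definition ext_ip :: "quat \<Rightarrow> ('v list \<Rightarrow> int) \<Rightarrow> ('v list \<Rightarrow> int) \<Rightarrow> quat" where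
  "ext_ip q f g = lin (\<lambda>xs. lin (\<lambda>ys. chain_ip q xs ys) g) f"

lemma ext_ip_diff_left:
  "finite (supp f) \<Longrightarrow> finite (supp f') \<Longrightarrow> ext_ip q (\<lambda>x. f x - f' x) g = ext_ip q f g - ext_ip q f' g"
  unfolding ext_ip_def by (rule lin_diff)

lemma ext_ip_add_left:
  "finite (supp f) \<Longrightarrow> finite (supp f') \<Longrightarrow> ext_ip q (\<lambda>x. f x + f' x) g = ext_ip q f g + ext_ip q f' g"
  unfolding ext_ip_def by (rule lin_add)

lemma ext_ip_diff_right:
  "finite (supp g) \<Longrightarrow> finite (supp g') \<Longrightarrow> ext_ip q f (\<lambda>x. g x - g' x) = ext_ip q f g - ext_ip q f g'"
  unfolding ext_ip_def by (simp add: lin_diff lin_fun_diff)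

lemma ext_ip_add_right:
  "finite (supp g) \<Longrightarrow> finite (supp g') \<Longrightarrow> ext_ip q f (\<lambda>x. g x + g' x) = ext_ip q f g + ext_ip q f g'"
  unfolding ext_ip_def by (simp add: lin_add lin_fun_add)

lemma ext_ip_sum_left:
  "finite J \<Longrightarrow> (\<And>j. j \<in> J \<Longrightarrow> finite (supp (F j))) \<Longrightarrow>
   ext_ip q (\<lambda>x. \<Sum>j\<in>J. F j x) g = (\<Sum>j\<in>J. ext_ip q (F j) g)"
  unfolding ext_ip_def by (rule lin_sum)

lemma ext_ip_sum_right:
  "finite J \<Longrightarrow> (\<And>j. j \<in> J \<Longrightarrow> finite (supp (F j))) \<Longrightarrow>
   ext_ip q f (\<lambda>x. \<Sum>j\<in>J. F j x) = (\<Sum>j\<in>J. ext_ip q f (F j))"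
  unfolding ext_ip_def by (simp add: lin_sum lin_fun_sum)

lemma ext_ip_zero_left [simp]: "ext_ip q (\<lambda>_. 0) g = 0"
  unfolding ext_ip_def by simp

lemma ext_ip_zero [simp]: "ext_ip 0 f g = 0"
proof -
  have "chain_ip 0 xs = (\<lambda>_. 0)" for xs by (simp add: fun_eq_iff)
  then show ?thesis unfolding ext_ip_def by simp
qed

lemma ext_ip_commute: "ext_ip (qcnj q) g f = qcnj (ext_ip q f g)"
  unfolding ext_ip_def qcnj_lin by (subst lin_swap) (simp add: chain_ip_commute)

lemma ext_ip_pt: "ext_ip q (pt xs) (pt ys) = chain_ip q xs ys"
  unfolding ext_ip_def by (simp add: lin_pt)

lemma ext_ip_pt_left: "ext_ip q (pt xs) g = lin (chain_ip q xs) g"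
  unfolding ext_ip_def by (simp add: lin_pt)

lemma ext_ip_fpush:
  "finite (supp f) \<Longrightarrow> finite (supp g) \<Longrightarrow>
   ext_ip q (fpush h f) (fpush k g) = lin (\<lambda>xs. lin (\<lambda>ys. chain_ip q (h xs) (k ys)) g) f"
  unfolding ext_ip_def by (simp add: lin_fpush)

lemma ext_ip_fpush_Cons:
  "finite (supp T) \<Longrightarrow> finite (supp U) \<Longrightarrow>
   ext_ip 1 (fpush ((#) a) T) (fpush ((#) b) U) = ext_ip (ip a b) T U"
  by (subst ext_ip_fpush) (simp_all add: ext_ip_def)

lemma ext_ip_tgens_left: "f \<in> tgens lm rm n \<Longrightarrow> g \<in> fsums n \<Longrightarrow> ext_ip q f g = 0"
  unfolding tgens_def
proof (elim UnE CollectE exE conjE)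
  fix as bs x y
  assume f: "f = (\<lambda>ys. pt (as @ [x + y] @ bs) ys - pt (as @ [x] @ bs) ys - pt (as @ [y] @ bs) ys)"
    and l: "length as + length bs + 1 = n" and g: "g \<in> fsums n"
  have "ext_ip q f g = lin (\<lambda>ys. chain_ip q (as @ [x + y] @ bs) ys - chain_ip q (as @ [x] @ bs) ys
      - chain_ip q (as @ [y] @ bs) ys) g"
    unfolding f by (simp add: ext_ip_diff_left finite_supp_diff supp_pt ext_ip_pt_left lin_fun_diff)
  also have "\<dots> = 0"
    using lin_cong[of g _ "\<lambda>_. 0"] chain_ip_add_slot fsums_length[OF g] l by simp
  finally show ?thesis .
next
  fix as bs x y a
  assume f: "f = (\<lambda>ys. pt (as @ [rm x a, y] @ bs) ys - pt (as @ [x, lm a y] @ bs) ys)"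
    and l: "length as + length bs + 2 = n" and g: "g \<in> fsums n"
  have "ext_ip q f g = lin (\<lambda>ys. chain_ip q (as @ [rm x a, y] @ bs) ys - chain_ip q (as @ [x, lm a y] @ bs) ys) g"
    unfolding f by (simp add: ext_ip_diff_left supp_pt ext_ip_pt_left lin_fun_diff)
  also have "\<dots> = 0"
    using lin_cong[of g _ "\<lambda>_. 0"] chain_ip_balanced_slot fsums_length[OF g] l by simp
  finally show ?thesis .
qed

lemma ext_ip_trel_left: "f \<in> rel n \<Longrightarrow> g \<in> fsums n \<Longrightarrow> ext_ip q f g = 0"
proof (induction rule: trel.induct)
  case (gen f) then show ?case by (rule ext_ip_tgens_left)
next
  case (diff f1 f2) then show ?case by (simp add: ext_ip_diff_left trel_finite_supp)
qed simp

lemma ext_ip_trel_right: "g \<in> rel n \<Longrightarrow> f \<in> fsums n \<Longrightarrow> ext_ip q f g = 0"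
  using ext_ip_trel_left[of g n f "qcnj q"] ext_ip_commute[of "qcnj q" f g] by simp

lemma ext_ip_cong:
  assumes f: "f \<in> fsums n" and g: "g \<in> fsums n"
    and ff': "(\<lambda>x. f' x - f x) \<in> rel n" and gg': "(\<lambda>x. g' x - g x) \<in> rel n"
  shows "ext_ip q f' g' = ext_ip q f g"
proof -
  have f': "f' \<in> fsums n" and g': "g' \<in> fsums n"
    using tcls_fsums[OF f] tcls_fsums[OF g] ff' gg' by (simp_all add: tcls_def)
  have "ext_ip q f' g' = ext_ip q f g' + ext_ip q (\<lambda>x. f' x - f x) g'"
    using ext_ip_diff_left[of f' f q g'] f f' by (simp add: fsums_finite_supp)
  also have "\<dots> = ext_ip q f g + ext_ip q f (\<lambda>x. g' x - g x)"
    using ext_ip_diff_right[of g' g q f] ext_ip_trel_left[OF ff' g'] g g' by (simp add: fsums_finite_supp)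
  also have "\<dots> = ext_ip q f g"
    using ext_ip_trel_right[OF gg' f] by simp
  finally show ?thesis .
qed


section \<open>Gram--Schmidt\<close>

definition orthonormal :: "'v list \<Rightarrow> bool" where
  "orthonormal es \<longleftrightarrow> (\<forall>i<length es. \<forall>j<length es. ip (es!i) (es!j) = (if i = j then 1 else 0))"

definition rspan :: "'v list \<Rightarrow> 'v set" where
  "rspan es = {\<Sum>j<length es. rm (es!j) (c j) | c. True}"

lemma rspan_snoc_add:
  assumes "u \<in> rspan es"
  shows "u + rm e a \<in> rspan (es @ [e])"
proof -
  obtain c where u: "u = (\<Sum>j<length es. rm (es!j) (c j))"
    using assms by (auto simp: rspan_def)
  define d where "d j = (if j < length es then c j else a)" for j
  have "u + rm e a = (\<Sum>j<length (es @ [e]). rm ((es @ [e])!j) (d j))"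
    by (simp add: u d_def nth_append)
  then show ?thesis by (auto simp: rspan_def)
qed

lemma orthonormal_snoc:
  assumes es: "orthonormal es" and ee: "ip e e = 1" and perp: "\<And>k. k < length es \<Longrightarrow> ip e (es!k) = 0"
  shows "orthonormal (es @ [e])"
proof -
  have perp': "ip (es!k) e = 0" if "k < length es" for k
    using perp[OF that] ip_commute[of "es!k" e] by simp
  show ?thesis
    unfolding orthonormal_def
    using es ee perp perp' by (auto simp: orthonormal_def nth_append less_Suc_eq)
qed

lemma residual_orthogonal:
  assumes es: "orthonormal es" and k: "k < length es"
  shows "ip (u - (\<Sum>j<length es. rm (es!j) (ip u (es!j)))) (es!k) = 0"
proof -
  have "(\<Sum>j<length es. ip (es!j) (es!k) * ip u (es!j)) = (\<Sum>j<length es. if j = k then ip u (es!k) else 0)"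
    by (rule sum.cong) (use es k in \<open>auto simp: orthonormal_def\<close>)
  then show ?thesis using k by (simp add: ip_diff_left ip_sum_left ip_rm_left)
qed

text \<open>Normalisation by the real scalar \<open>1 / \<parallel>w\<parallel>\<close>, which commutes with everything.\<close>

lemma normalize_nonzero:
  assumes "w \<noteq> 0"
  obtains s c where "ip (rm w s) (rm w s) = 1" "w = rm (rm w s) c"
proof -
  define r where "r = qRe (ip w w)"
  have wr: "ip w w = Quat r 0 0 0"
    using qnonneg_eq_Quat[OF ip_self_nonneg] by (simp add: r_def)
  have "r \<noteq> 0" using assms ip_self_eq_0 wr by (auto simp: zero_quat_def)
  moreover have "r \<ge> 0" using ip_self_nonneg[of w] by (simp add: qnonneg_def r_def)
  ultimately have r: "r > 0" by simp
  let ?s = "Quat (1 / sqrt r) 0 0 0" and ?c = "Quat (sqrt r) 0 0 0"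
  have "ip (rm w ?s) (rm w ?s) = 1"
    unfolding ip_rm wr by (rule quat_eqI) (use r in \<open>simp_all add: algebra_simps\<close>)
  moreover have "w = rm (rm w ?s) ?c"
    unfolding rm_mult[symmetric] using r rm_one[of w] by (simp add: times_quat_def one_quat_def)
  ultimately show ?thesis by (rule that)
qed

lemma orthonormal_rspan_exists: "\<exists>es. orthonormal es \<and> set us \<subseteq> rspan es"
proof (induction us)
  case Nil
  show ?case by (rule exI[of _ "[]"]) (simp add: orthonormal_def)
next
  case (Cons u us)
  then obtain es where es: "orthonormal es" and us: "set us \<subseteq> rspan es" by blast
  define p where "p = (\<Sum>j<length es. rm (es!j) (ip u (es!j)))"
  have p: "p \<in> rspan es" by (auto simp: p_def rspan_def)
  show ?case
  proof (cases "u - p = 0")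
    case True
    then show ?thesis using es us p by auto
  next
    case False
    then obtain s c where ee: "ip (rm (u - p) s) (rm (u - p) s) = 1"
      and w: "u - p = rm (rm (u - p) s) c"
      by (rule normalize_nonzero)
    let ?e = "rm (u - p) s"
    have "orthonormal (es @ [?e])"
      by (rule orthonormal_snoc[OF es ee]) (simp add: ip_rm_left residual_orthogonal[OF es] p_def)
    moreover have "u \<in> rspan (es @ [?e])"
      using rspan_snoc_add[OF p, of ?e c] w by (metis diff_add_cancel add.commute)
    moreover have "set us \<subseteq> rspan (es @ [?e])"
      using rspan_snoc_add[of _ es ?e 0] us by auto
    ultimately show ?thesis by auto
  qed
qed


section \<open>Positivity\<close>

lemma trel_zero_first: "length t = n \<Longrightarrow> pt (0 # t) \<in> rel (Suc n)"
  using trel_uminus[OF trel_additive[of "[]" t "Suc n" 0 0 lm rm]] by (simp add: fun_eq_iff)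

lemma trel_sum_first:
  "finite J \<Longrightarrow> length t = n \<Longrightarrow>
   (\<lambda>ys. pt ((\<Sum>j\<in>J. a j) # t) ys - (\<Sum>j\<in>J. pt (a j # t) ys)) \<in> rel (Suc n)"
proof (induction J rule: finite_induct)
  case empty then show ?case using trel_zero_first[of t n] by simp
next
  case (insert i J)
  show ?case
    by (rule trel_add'[OF trel_additive[of "[]" t "Suc n" "a i" "\<Sum>j\<in>J. a j"] insert.IH])
       (use insert in auto)
qed

lemma trel_move_scalar:
  "length t = n \<Longrightarrow> t \<noteq> [] \<Longrightarrow> (\<lambda>ys. pt (rm e c # t) ys - pt (e # lhd lm c t) ys) \<in> rel (Suc n)"
  by (cases t) (use trel_balanced[of "[]" "tl t" "Suc n" rm e c "hd t" lm] in auto)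

lemma trel_of_int_scalar: "(\<lambda>ys. pt [lm (of_int k) x] ys - k * pt [x] ys) \<in> rel 1"
proof (induction k rule: int_induct[where k = 0])
  case base
  show ?case using trel_zero_first[of "[]" 0] by simp
next
  case (step1 i)
  have e: "lm (of_int (i + 1)) x = lm (of_int i) x + x" by (simp add: lm_add_scalar)
  have "(\<lambda>ys. pt [lm (of_int i) x + x] ys - pt [lm (of_int i) x] ys - pt [x] ys) \<in> rel 1"
    using trel_additive[of "[]" "[]" 1 "lm (of_int i) x" x lm rm] by simp
  from trel_add[OF this step1(2)] show ?case unfolding e by (simp add: algebra_simps)
next
  case (step2 i)
  have e: "lm (of_int i) x = lm (of_int (i - 1)) x + x" using lm_add_scalar[of "of_int i - 1" 1 x] by simp
  have "(\<lambda>ys. pt [lm (of_int (i - 1)) x + x] ys - pt [lm (of_int (i - 1)) x] ys - pt [x] ys) \<in> rel 1"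
    using trel_additive[of "[]" "[]" 1 "lm (of_int (i - 1)) x" x lm rm] by simp
  from trel.diff[OF step2(2)[unfolded e] this] show ?case by (simp add: algebra_simps)
qed

text \<open>Expanding the first factor in a right basis and moving the coefficients into the second
  factor; this needs a second factor, hence \<open>t \<noteq> []\<close>.\<close>

lemma trel_expand_first:
  "length t = n \<Longrightarrow> t \<noteq> [] \<Longrightarrow> u = (\<Sum>j<m. rm (es!j) (c j)) \<Longrightarrow>
   (\<lambda>ys. pt (u # t) ys - (\<Sum>j<m. pt (es!j # lhd lm (c j) t) ys)) \<in> rel (Suc n)"
  by (rule trel_add'[OF trel_sum_first[of "{..<m}" t n "\<lambda>j. rm (es!j) (c j)"]
        trel_sum[of "{..<m}" "\<lambda>j ys. pt (rm (es!j) (c j) # t) ys - pt (es!j # lhd lm (c j) t) ys"]])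
     (auto intro: trel_move_scalar simp: sum_subtractf)

lemma fsums_1_trel_pt:
  assumes f: "f \<in> fsums 1"
  obtains w where "(\<lambda>ys. f ys - pt [w] ys) \<in> rel 1"
proof -
  define S where "S = supp f"
  have fin: "finite S" using f by (simp add: fsums_iff S_def)
  have xs1: "[hd xs] = xs" if "xs \<in> S" for xs
    using fsums_length[OF f that[unfolded S_def]] by (cases xs) auto
  define w where "w = (\<Sum>xs\<in>S. lm (of_int (f xs)) (hd xs))"
  have sum_first: "(\<lambda>ys. pt [w] ys - (\<Sum>xs\<in>S. pt [lm (of_int (f xs)) (hd xs)] ys)) \<in> rel 1"
    using trel_sum_first[OF fin, of "[]" 0 "\<lambda>xs. lm (of_int (f xs)) (hd xs)"] by (simp add: w_def)
  have scalars: "(\<lambda>ys. \<Sum>xs\<in>S. pt [lm (of_int (f xs)) (hd xs)] ys - f xs * pt [hd xs] ys) \<in> rel 1"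
    by (rule trel_sum[OF fin]) (rule trel_of_int_scalar)
  have f_eq: "f ys = (\<Sum>xs\<in>S. f xs * pt [hd xs] ys)" for ys
  proof -
    have "f ys = (\<Sum>xs\<in>S. f xs * pt xs ys)"
      unfolding S_def by (rule pt_expansion) (use fin in \<open>simp add: S_def\<close>)
    also have "\<dots> = (\<Sum>xs\<in>S. f xs * pt [hd xs] ys)"
      using xs1 by (intro sum.cong refl) simp
    finally show ?thesis .
  qed
  have "(\<lambda>ys. f ys - pt [w] ys) \<in> rel 1"
    by (rule trel_add'[OF trel_uminus[OF sum_first] trel_uminus[OF scalars]])
       (subst f_eq, simp add: sum_subtractf)
  then show ?thesis by (rule that)
qed

lemma ext_ip_pos_1:
  assumes f: "f \<in> fsums 1"
  shows "qnonneg (ext_ip 1 f f) \<and> (ext_ip 1 f f = 0 \<longrightarrow> f \<in> rel 1)"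
proof -
  obtain w where fw: "(\<lambda>ys. f ys - pt [w] ys) \<in> rel 1"
    using fsums_1_trel_pt[OF f] .
  have "pt [w] \<in> fsums 1" by (simp add: fsums_pt)
  from ext_ip_cong[OF this this fw fw] have eq: "ext_ip 1 f f = ip w w"
    by (simp add: ext_ip_pt)
  have zero: "pt [0] \<in> rel 1"
    using trel_zero_first[of "[]" 0] by simp
  have "f \<in> rel 1" if "w = 0"
    by (rule trel_add'[OF fw zero]) (simp add: that)
  then show ?thesis
    unfolding eq using ip_self_nonneg[of w] ip_self_eq_0[of w] by blast
qed

lemma first_factor_expansion:
  assumes n: "1 \<le> n" and f: "f \<in> fsums (Suc n)"
  obtains es T where "orthonormal es" "\<And>j. T j \<in> fsums n"
    "(\<lambda>ys. f ys - (\<Sum>j<length es. fpush ((#) (es!j)) (T j) ys)) \<in> rel (Suc n)"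
proof -
  define S where "S = supp f"
  have fin: "finite S" and len: "\<And>xs. xs \<in> S \<Longrightarrow> length xs = Suc n"
    using f by (auto simp: fsums_iff S_def)
  from finite_list[OF finite_imageI[OF fin]] obtain us where us: "set us = hd ` S" ..
  obtain es where es: "orthonormal es" and span: "hd ` S \<subseteq> rspan es"
    using orthonormal_rspan_exists[of us] unfolding us by blast
  define m where "m = length es"
  have "\<forall>xs\<in>S. \<exists>c. hd xs = (\<Sum>j<m. rm (es!j) (c j))"
    using span by (auto simp: rspan_def m_def)
  then obtain C where C: "\<And>xs. xs \<in> S \<Longrightarrow> hd xs = (\<Sum>j<m. rm (es!j) (C xs j))"
    by (metis bchoice)
  define T where "T j = (\<lambda>ys. \<Sum>xs\<in>S. f xs * pt (lhd lm (C xs j) (tl xs)) ys)" for j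
  have T: "T j \<in> fsums n" for j
    unfolding T_def by (rule fsums_sum[OF fin], rule fsums_smult, rule fsums_pt) (simp add: len)
  have expanded: "(\<lambda>ys. \<Sum>xs\<in>S. f xs * (pt (hd xs # tl xs) ys - (\<Sum>j<m. pt (es!j # lhd lm (C xs j) (tl xs)) ys)))
      \<in> rel (Suc n)"
  proof (rule trel_sum[OF fin], rule trel_smult, rule trel_expand_first)
    fix xs assume xs: "xs \<in> S"
    show "length (tl xs) = n" "hd xs = (\<Sum>j<m. rm (es!j) (C xs j))"
      using len[OF xs] C[OF xs] by simp_all
    show "tl xs \<noteq> []" using len[OF xs] n by (cases xs) auto
  qed
  have expansion: "f ys - (\<Sum>j<length es. fpush ((#) (es!j)) (T j) ys)
      = (\<Sum>xs\<in>S. f xs * (pt (hd xs # tl xs) ys - (\<Sum>j<m. pt (es!j # lhd lm (C xs j) (tl xs)) ys)))" for ys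
  proof -
    have "f ys = (\<Sum>xs\<in>S. f xs * pt xs ys)"
      unfolding S_def by (rule pt_expansion) (use fin in \<open>simp add: S_def\<close>)
    also have "\<dots> = (\<Sum>xs\<in>S. f xs * pt (hd xs # tl xs) ys)"
    proof (rule sum.cong[OF refl])
      fix xs assume "xs \<in> S"
      then have "xs \<noteq> []" using len by fastforce
      then show "f xs * pt xs ys = f xs * pt (hd xs # tl xs) ys" by simp
    qed
    finally have f_eq: "f ys = (\<Sum>xs\<in>S. f xs * pt (hd xs # tl xs) ys)" .
    have g_eq: "(\<Sum>j<length es. fpush ((#) (es!j)) (T j) ys)
        = (\<Sum>xs\<in>S. f xs * (\<Sum>j<m. pt (es!j # lhd lm (C xs j) (tl xs)) ys))"
      unfolding T_def fpush_Cons_sum sum_distrib_left m_def by (rule sum.swap)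
    show ?thesis by (subst f_eq, subst g_eq) (simp add: right_diff_distrib sum_subtractf)
  qed
  have "(\<lambda>ys. f ys - (\<Sum>j<length es. fpush ((#) (es!j)) (T j) ys))
      = (\<lambda>ys. \<Sum>xs\<in>S. f xs * (pt (hd xs # tl xs) ys - (\<Sum>j<m. pt (es!j # lhd lm (C xs j) (tl xs)) ys)))"
    by (rule ext) (rule expansion)
  with expanded have "(\<lambda>ys. f ys - (\<Sum>j<length es. fpush ((#) (es!j)) (T j) ys)) \<in> rel (Suc n)"
    by (simp only:)
  then show ?thesis by (rule that[OF es T])
qed

lemma ext_ip_orthonormal_expansion:
  assumes es: "orthonormal es" and T: "\<And>j. finite (supp (T j))"
  defines "g \<equiv> \<lambda>ys. \<Sum>j<length es. fpush ((#) (es!j)) (T j) ys"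
  shows "ext_ip 1 g g = (\<Sum>j<length es. ext_ip 1 (T j) (T j))"
proof -
  let ?m = "length es"
  have fin: "finite (supp (fpush ((#) (es!j)) (T j)))" for j
    using finite_supp_fpush T by blast
  have "ext_ip 1 g g = (\<Sum>j<?m. \<Sum>k<?m. ext_ip 1 (fpush ((#) (es!j)) (T j)) (fpush ((#) (es!k)) (T k)))"
    unfolding g_def by (simp add: ext_ip_sum_left ext_ip_sum_right fin finite_supp_sum)
  also have "\<dots> = (\<Sum>j<?m. \<Sum>k<?m. if k = j then ext_ip 1 (T j) (T k) else 0)"
    using es by (intro sum.cong refl) (auto simp: ext_ip_fpush_Cons T orthonormal_def)
  finally show ?thesis by simp
qed

lemma ext_ip_pos_Suc:
  assumes n: "1 \<le> n"
    and IH: "\<And>T. T \<in> fsums n \<Longrightarrow> qnonneg (ext_ip 1 T T) \<and> (ext_ip 1 T T = 0 \<longrightarrow> T \<in> rel n)"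
    and f: "f \<in> fsums (Suc n)"
  shows "qnonneg (ext_ip 1 f f) \<and> (ext_ip 1 f f = 0 \<longrightarrow> f \<in> rel (Suc n))"
proof -
  obtain es T where es: "orthonormal es" and T: "\<And>j. T j \<in> fsums n"
    and fg: "(\<lambda>ys. f ys - (\<Sum>j<length es. fpush ((#) (es!j)) (T j) ys)) \<in> rel (Suc n)"
    using first_factor_expansion[OF n f] by blast
  define g where "g = (\<lambda>ys. \<Sum>j<length es. fpush ((#) (es!j)) (T j) ys)"
  have g: "g \<in> fsums (Suc n)"
    unfolding g_def by (rule fsums_sum, simp, rule fsums_fpush_Cons, rule T)
  have fg': "(\<lambda>x. f x - g x) \<in> rel (Suc n)"
    using fg by (simp add: g_def)
  have "ext_ip 1 f f = ext_ip 1 g g"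
    by (rule ext_ip_cong[OF g g fg' fg'])
  also have "\<dots> = (\<Sum>j<length es. ext_ip 1 (T j) (T j))"
    unfolding g_def by (rule ext_ip_orthonormal_expansion[OF es fsums_finite_supp[OF T]])
  finally have eq: "ext_ip 1 f f = (\<Sum>j<length es. ext_ip 1 (T j) (T j))" .
  have nonneg: "qnonneg (ext_ip 1 (T j) (T j))" for j
    using IH[OF T] by blast
  have "f \<in> rel (Suc n)" if "ext_ip 1 f f = 0"
  proof -
    have "T j \<in> rel n" if "j < length es" for j
    proof -
      have "ext_ip 1 (T j) (T j) = 0"
        by (rule qnonneg_sum_eq_0[of "{..<length es}"]) (use nonneg eq \<open>ext_ip 1 f f = 0\<close> that in auto)
      then show ?thesis using IH[OF T] by blast
    qed
    then have "g \<in> rel (Suc n)"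
      unfolding g_def by (intro trel_sum) (auto intro: trel_fpush_Cons)
    then show ?thesis by (rule trel_add'[OF fg']) simp
  qed
  moreover have "qnonneg (ext_ip 1 f f)"
    unfolding eq by (rule qnonneg_sum) (rule nonneg)
  ultimately show ?thesis by blast
qed

lemma ext_ip_pos:
  "1 \<le> n \<Longrightarrow> f \<in> fsums n \<Longrightarrow> qnonneg (ext_ip 1 f f) \<and> (ext_ip 1 f f = 0 \<longrightarrow> f \<in> rel n)"
proof (induction n arbitrary: f rule: nat_induct_at_least)
  case base then show ?case by (rule ext_ip_pos_1)
next
  case (Suc n) then show ?case using ext_ip_pos_Suc by blast
qed


section \<open>The inner product on the tensor power\<close>

definition tensor_ip :: "('v list \<Rightarrow> int) set \<Rightarrow> ('v list \<Rightarrow> int) set \<Rightarrow> quat" where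
  "tensor_ip X Y = ext_ip 1 (SOME f. f \<in> X) (SOME g. g \<in> Y)"

lemma tensor_ip_tcls:
  assumes f: "f \<in> fsums n" and g: "g \<in> fsums n"
  shows "tensor_ip (tcls lm rm n f) (tcls lm rm n g) = ext_ip 1 f g"
proof -
  have "(SOME h. h \<in> tcls lm rm n f) \<in> tcls lm rm n f" "(SOME h. h \<in> tcls lm rm n g) \<in> tcls lm rm n g"
    using tcls_self[of f lm rm n] tcls_self[of g lm rm n] by (auto simp: some_in_eq)
  then show ?thesis
    unfolding tensor_ip_def by (intro ext_ip_cong[OF f g] tcls_diff_trel)
qed

lemma tensor_ip_tens:
  assumes "1 \<le> n" "length us = n" "length vs = n"
  shows "tensor_ip (tens lm rm n us) (tens lm rm n vs) = tformula lm ip us vs"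
proof -
  have "us \<noteq> []" "vs \<noteq> []" using assms by auto
  then show ?thesis
    unfolding tens_def using assms(2,3) by (simp add: tensor_ip_tcls fsums_pt ext_ip_pt tformula_eq_chain_ip)
qed

lemma tensor_ip_add_left:
  assumes "X \<in> tpow lm rm n" "Y \<in> tpow lm rm n" "Z \<in> tpow lm rm n"
  shows "tensor_ip (tadd X Y) Z = tensor_ip X Z + tensor_ip Y Z"
proof -
  obtain f g h where "f \<in> fsums n" "g \<in> fsums n" "h \<in> fsums n"
    and "X = tcls lm rm n f" "Y = tcls lm rm n g" "Z = tcls lm rm n h"
    using assms by (meson tpowE)
  then show ?thesis
    by (simp add: tadd_tcls tensor_ip_tcls fsums_add ext_ip_add_left fsums_finite_supp)
qed

lemma tensor_ip_add_right:
  assumes "X \<in> tpow lm rm n" "Y \<in> tpow lm rm n" "Z \<in> tpow lm rm n"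
  shows "tensor_ip X (tadd Y Z) = tensor_ip X Y + tensor_ip X Z"
proof -
  obtain f g h where "f \<in> fsums n" "g \<in> fsums n" "h \<in> fsums n"
    and "X = tcls lm rm n f" "Y = tcls lm rm n g" "Z = tcls lm rm n h"
    using assms by (meson tpowE)
  then show ?thesis
    by (simp add: tadd_tcls tensor_ip_tcls fsums_add ext_ip_add_right fsums_finite_supp)
qed

lemma tensor_ip_commute:
  assumes "X \<in> tpow lm rm n" "Y \<in> tpow lm rm n"
  shows "tensor_ip Y X = qcnj (tensor_ip X Y)"
proof -
  obtain f g where f: "f \<in> fsums n" and g: "g \<in> fsums n"
    and "X = tcls lm rm n f" "Y = tcls lm rm n g"
    using assms by (meson tpowE)
  then show ?thesis
    using ext_ip_commute[of 1 g f] by (simp add: tensor_ip_tcls)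
qed

lemma tensor_ip_trm:
  assumes n: "1 \<le> n" and X: "X \<in> tpow lm rm n" and Y: "Y \<in> tpow lm rm n"
  shows "tensor_ip (trm lm rm n X a) (trm lm rm n Y b) = qcnj b * tensor_ip X Y * a"
proof -
  obtain f g where f: "f \<in> fsums n" and g: "g \<in> fsums n"
    and XY: "X = tcls lm rm n f" "Y = tcls lm rm n g"
    using X Y by (meson tpowE)
  have "tensor_ip (trm lm rm n X a) (trm lm rm n Y b) = ext_ip 1 (fpush (rlst rm a) f) (fpush (rlst rm b) g)"
    unfolding XY trm_tcls[OF f] trm_tcls[OF g]
    by (rule tensor_ip_tcls[OF fsums_fpush[OF length_rlst f] fsums_fpush[OF length_rlst g]])
  also have "\<dots> = lin (\<lambda>xs. lin (\<lambda>ys. chain_ip 1 (rlst rm a xs) (rlst rm b ys)) g) f"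
    by (rule ext_ip_fpush) (simp_all add: fsums_finite_supp[OF f] fsums_finite_supp[OF g])
  also have "\<dots> = lin (\<lambda>xs. lin (\<lambda>ys. qcnj b * chain_ip 1 xs ys * a) g) f"
  proof (intro lin_cong)
    fix xs ys assume "xs \<in> supp f" "ys \<in> supp g"
    then have "length xs = n" "length ys = n" using fsums_length f g by blast+
    then show "chain_ip 1 (rlst rm a xs) (rlst rm b ys) = qcnj b * chain_ip 1 xs ys * a"
      using n by (intro chain_ip_rlst) auto
  qed
  also have "\<dots> = qcnj b * tensor_ip X Y * a"
    unfolding XY tensor_ip_tcls[OF f g] ext_ip_def by (simp add: lin_fun_mult_left lin_fun_mult_right)
  finally show ?thesis .
qed

lemma tensor_ip_tlm:
  assumes X: "X \<in> tpow lm rm n" and Y: "Y \<in> tpow lm rm n"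
  shows "tensor_ip X (tlm lm rm n a Y) = tensor_ip (tlm lm rm n (qcnj a) X) Y"
proof -
  obtain f g where f: "f \<in> fsums n" and g: "g \<in> fsums n"
    and XY: "X = tcls lm rm n f" "Y = tcls lm rm n g"
    using X Y by (meson tpowE)
  have "tensor_ip X (tlm lm rm n a Y) = lin (\<lambda>xs. lin (\<lambda>ys. chain_ip 1 xs (lhd lm a ys)) g) f"
    unfolding XY tlm_tcls[OF g] tensor_ip_tcls[OF f fsums_fpush[OF length_lhd g]]
    by (simp add: ext_ip_def lin_fpush fsums_finite_supp[OF g])
  also have "\<dots> = lin (\<lambda>xs. lin (\<lambda>ys. chain_ip 1 (lhd lm (qcnj a) xs) ys) g) f"
    by (simp add: chain_ip_lhd)
  also have "\<dots> = tensor_ip (tlm lm rm n (qcnj a) X) Y"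
    unfolding XY tlm_tcls[OF f] tensor_ip_tcls[OF fsums_fpush[OF length_lhd f] g]
    by (simp add: ext_ip_def lin_fpush fsums_finite_supp[OF f])
  finally show ?thesis .
qed

lemma tensor_ip_pos:
  assumes n: "1 \<le> n" and X: "X \<in> tpow lm rm n"
  shows "qnonneg (tensor_ip X X)" and "tensor_ip X X = 0 \<Longrightarrow> X = tzero lm rm n"
proof -
  obtain f where f: "f \<in> fsums n" and Xf: "X = tcls lm rm n f"
    using X by (meson tpowE)
  have pos: "qnonneg (ext_ip 1 f f) \<and> (ext_ip 1 f f = 0 \<longrightarrow> f \<in> rel n)"
    by (rule ext_ip_pos[OF n f])
  then show "qnonneg (tensor_ip X X)"
    unfolding Xf tensor_ip_tcls[OF f f] by blast
  assume "tensor_ip X X = 0"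
  then have "f \<in> rel n"
    using pos unfolding Xf tensor_ip_tcls[OF f f] by blast
  then show "X = tzero lm rm n"
    unfolding Xf tzero_def by (intro tcls_eq) simp
qed

lemma tensor_ip_is_qip:
  "1 \<le> n \<Longrightarrow> is_qip (tpow lm rm n) tadd (tzero lm rm n) (trm lm rm n) tensor_ip"
  unfolding is_qip_def
  by (intro conjI ballI allI impI tensor_ip_add_left tensor_ip_add_right tensor_ip_trm tensor_ip_commute
      tensor_ip_pos)

end

theorem proposition4p2:
  fixes lm :: "quat \<Rightarrow> 'v::ab_group_add \<Rightarrow> 'v"
    and rm :: "'v \<Rightarrow> quat \<Rightarrow> 'v"
    and ip :: "'v \<Rightarrow> 'v \<Rightarrow> quat"
    and n :: nat
  assumes "two_sided_qhs lm rm ip"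
    and "\<forall>u v a. ip u (lm a v) = ip (lm (qcnj a) u) v"
    and "n \<ge> 1"
  shows "\<exists>B. (\<forall>us vs. length us = n \<longrightarrow> length vs = n \<longrightarrow>
               B (tens lm rm n us) (tens lm rm n vs) = tformula lm ip us vs)
           \<and> is_qip (tpow lm rm n) tadd (tzero lm rm n) (trm lm rm n) B
           \<and> (\<forall>x\<in>tpow lm rm n. \<forall>y\<in>tpow lm rm n. \<forall>a.
                B x (tlm lm rm n a y) = B (tlm lm rm n (qcnj a) x) y)"
proof -
  interpret adjoint_qhs lm rm ip
    using assms(1,2) by unfold_locales blast+
  show ?thesis
    using assms(3)
    by (intro exI[of _ tensor_ip] conjI allI impI ballI tensor_ip_tens tensor_ip_is_qip tensor_ip_tlm)
qed

end
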